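(* Let $\varphi$ be a skew-morphism of a finite group $A$ with power function $\pi:A\to\mathbb{Z}_m$, where $m$ is the order of $\varphi$, let $n$ be a positive multiple of $m$, and let $\Pi:A\to\mathbb{Z}_n$ be an extended power function of $\varphi$. Then for all nonnegative integers $k,k_1,k_2,q,r$: (a) $\sigma_\Pi(xy,k)\equiv\sigma_\Pi(y,\sigma_\Pi(x,k))\pmod n$ for all $x,y\in A$; (b) $\sigma_\Pi(x,k)\equiv0\pmod n$ for all $x\in A$ if and only if $n\mid k$; (c) $\sigma_\Pi(x,qm+r)\equiv q\,\sigma_\Pi(x,m)+\sigma_\Pi(x,r)\pmod n$ for all $x\in A$; (d) $\sigma_\Pi(x,k_1)\equiv\sigma_\Pi(x,k_2)\pmod n$ for all $x\in A$ if and only if $k_1\equiv k_2\pmod n$.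
   Context: A skew-morphism of a finite group $A$ is a permutation $\varphi$ of $A$ with $\varphi(1_A)=1_A$ for which there is a function $\pi:A\to\mathbb{Z}_m$ ($m$ the order of $\varphi$) with $\varphi(xy)=\varphi(x)\varphi^{\pi(x)}(y)$ for all $x,y\in A$. For a positive multiple $n$ of $m$, $\Pi:A\to\mathbb{Z}_n$ is an extended power function of $\varphi$ if (i) $\Pi(x)\equiv\pi(x)\pmod m$ for all $x$; (ii) $\Pi(1_A)\equiv1\pmod n$; (iii) $\Pi(xy)\equiv\sum_{i=1}^{\Pi(x)}\Pi(\varphi^{i-1}(y))\pmod n$ for all $x,y\in A$. The derived function is $\sigma_\Pi(x,0)=0$, $\sigma_\Pi(x,k)=\sum_{i=1}^{k}\Pi(\varphi^{i-1}(x))\in\mathbb{Z}_n$ for $k>0$; in (a) the inner value is used as second argument via any nonnegative integer representative. *)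

theory Defs
  imports "HOL-Algebra.Group" "HOL-Number_Theory.Cong"
begin

definition perm_order :: "('a, 'b) monoid_scheme \<Rightarrow> ('a \<Rightarrow> 'a) \<Rightarrow> nat" where
  "perm_order G \<phi> = (LEAST m. 0 < m \<and> (\<forall>x\<in>carrier G. (\<phi> ^^ m) x = x))"

text \<open>phi is a skew-morphism of G with power function pi (values in Z_m represented by 0..m-1,
  m the order of phi).\<close>
definition skew_morphism ::
  "('a, 'b) monoid_scheme \<Rightarrow> ('a \<Rightarrow> 'a) \<Rightarrow> ('a \<Rightarrow> nat) \<Rightarrow> bool" where
  "skew_morphism G \<phi> \<pi> \<longleftrightarrow>
     bij_betw \<phi> (carrier G) (carrier G) \<and>
     \<phi> \<one>\<^bsub>G\<^esub> = \<one>\<^bsub>G\<^esub> \<and>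
     (\<forall>x\<in>carrier G. \<pi> x < perm_order G \<phi>) \<and>
     (\<forall>x\<in>carrier G. \<forall>y\<in>carrier G.
        \<phi> (x \<otimes>\<^bsub>G\<^esub> y) = \<phi> x \<otimes>\<^bsub>G\<^esub> (\<phi> ^^ \<pi> x) y)"

text \<open>Pi is an extended power function of phi (values in Z_n represented by 0..n-1).\<close>
definition ext_power_function ::
  "('a, 'b) monoid_scheme \<Rightarrow> ('a \<Rightarrow> 'a) \<Rightarrow> ('a \<Rightarrow> nat) \<Rightarrow> nat \<Rightarrow> ('a \<Rightarrow> nat) \<Rightarrow> bool" where
  "ext_power_function G \<phi> \<pi> n Pw \<longleftrightarrow>
     (\<forall>x\<in>carrier G. Pw x < n) \<and>
     (\<forall>x\<in>carrier G. [Pw x = \<pi> x] (mod perm_order G \<phi>)) \<and>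
     [Pw \<one>\<^bsub>G\<^esub> = 1] (mod n) \<and>
     (\<forall>x\<in>carrier G. \<forall>y\<in>carrier G.
        [Pw (x \<otimes>\<^bsub>G\<^esub> y) = (\<Sum>i<Pw x. Pw ((\<phi> ^^ i) y))] (mod n))"

text \<open>Derived function sigma_Pi(x,k) = sum_{i=1}^k Pi(phi^{i-1} x), as an element of Z_n
  (represented by 0..n-1).\<close>
definition sigma_fun :: "('a \<Rightarrow> 'a) \<Rightarrow> nat \<Rightarrow> ('a \<Rightarrow> nat) \<Rightarrow> 'a \<Rightarrow> nat \<Rightarrow> nat" where
  "sigma_fun \<phi> n Pw x k = (\<Sum>i<k. Pw ((\<phi> ^^ i) x)) mod n"

end

theory Submission
  imports Defs "HOL-Combinatorics.Cycles"
begin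

text \<open>Write \<open>s(x,k) = orbit_sum \<phi> \<Pi> x k = \<Sum>i<k. \<Pi>(\<phi>^i x)\<close>, so that
  \<open>\<sigma>\<^sub>\<Pi>(x,k) = s(x,k) mod n\<close>. Since \<open>\<Pi> \<equiv> \<pi> (mod m)\<close>, iterating the skew-morphism rule gives
  \<open>\<phi>^k (x y) = \<phi>^k x \<cdot> \<phi>^(s(x,k)) y\<close>. For \<open>k = m\<close> the left side is \<open>x y\<close>, so cancelling \<open>x\<close>
  shows that \<open>\<phi>^(s(x,m))\<close> is the identity, i.e. \<open>m\<close> divides \<open>s(x,m)\<close>. As
  \<open>s(x,qm+r) = q s(x,m) + s(x,r)\<close>, it follows that \<open>n\<close> divides \<open>s(x,n)\<close> and that
  \<open>s(x,k) mod n\<close> depends only on \<open>k mod n\<close>. Part (a) is then an induction on \<open>k\<close> using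
  the defining identity (iii) of \<open>\<Pi>\<close>, and (d), hence (b), follows by evaluating at \<open>x = 1\<close>,
  where \<open>s(1,k) = k \<Pi>(1) \<equiv> k\<close>.\<close>

lemma bij_betw_funpow_period:
  assumes "finite A" and "bij_betw f A A"
  obtains k where "0 < k" and "\<forall>x\<in>A. (f ^^ k) x = x"
proof -
  define p where "p x = (if x \<in> A then f x else x)" for x
  have "bij_betw p A A"
    using assms(2) by (rule bij_betw_cong[THEN iffD1, rotated]) (simp add: p_def)
  then have "p permutes A"
    by (rule bij_imp_permutes) (simp add: p_def)
  with assms(1) obtain k where "p ^^ k = id" and "0 < k"
    using permutation_is_nilpotent permutation_permutes by blast
  moreover have "(p ^^ i) x = (f ^^ i) x" if "x \<in> A" for i x
    using that assms(2)
    by (induction i) (simp_all add: p_def bij_betw_apply[OF bij_betw_funpow])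
  ultimately show thesis
    using that by (metis id_apply)
qed

lemma
  fixes G (structure)
  assumes "finite (carrier G)" and "bij_betw \<phi> (carrier G) (carrier G)"
  shows perm_order_pos: "0 < perm_order G \<phi>"
    and funpow_perm_order: "x \<in> carrier G \<Longrightarrow> (\<phi> ^^ perm_order G \<phi>) x = x"
proof -
  obtain k where "0 < k \<and> (\<forall>x\<in>carrier G. (\<phi> ^^ k) x = x)"
    using bij_betw_funpow_period[OF assms] by blast
  then have "0 < perm_order G \<phi> \<and> (\<forall>x\<in>carrier G. (\<phi> ^^ perm_order G \<phi>) x = x)"
    unfolding perm_order_def by (rule LeastI)
  then show "0 < perm_order G \<phi>" and "x \<in> carrier G \<Longrightarrow> (\<phi> ^^ perm_order G \<phi>) x = x"
    by auto
qed

lemma funpow_cong_perm_order: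
  fixes G (structure)
  assumes "finite (carrier G)" and "bij_betw \<phi> (carrier G) (carrier G)"
    and "x \<in> carrier G" and "[a = b] (mod perm_order G \<phi>)"
  shows "(\<phi> ^^ a) x = (\<phi> ^^ b) x"
  using assms funpow_perm_order[OF assms(1,2)]
  by (metis cong_def funpow_mod_eq)

lemma perm_order_dvd_iff:
  fixes G (structure)
  assumes "finite (carrier G)" and "bij_betw \<phi> (carrier G) (carrier G)"
  shows "(\<forall>x\<in>carrier G. (\<phi> ^^ a) x = x) \<longleftrightarrow> perm_order G \<phi> dvd a"
proof
  let ?m = "perm_order G \<phi>"
  assume fixed: "\<forall>x\<in>carrier G. (\<phi> ^^ a) x = x"
  show "?m dvd a"
  proof (rule ccontr)
    assume "\<not> ?m dvd a"
    then have "0 < a mod ?m" by (simp add: mod_greater_zero_iff_not_dvd)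
    moreover have "\<forall>x\<in>carrier G. (\<phi> ^^ (a mod ?m)) x = x"
      using fixed funpow_perm_order[OF assms] by (simp add: funpow_mod_eq)
    ultimately have "?m \<le> a mod ?m"
      unfolding perm_order_def by (blast intro: Least_le)
    moreover have "a mod ?m < ?m"
      using perm_order_pos[OF assms] by simp
    ultimately show False
      by simp
  qed
next
  assume "perm_order G \<phi> dvd a"
  then show "\<forall>x\<in>carrier G. (\<phi> ^^ a) x = x"
    using funpow_cong_perm_order[OF assms, of _ a 0] by (simp add: cong_0_iff)
qed

lemma funpow_apply_funpow: "(f ^^ a) ((f ^^ b) x) = (f ^^ (b + a)) x"
  by (metis add.commute comp_apply funpow_add)

definition orbit_sum :: "('a \<Rightarrow> 'a) \<Rightarrow> ('a \<Rightarrow> nat) \<Rightarrow> 'a \<Rightarrow> nat \<Rightarrow> nat" where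
  "orbit_sum f P x k = (\<Sum>i<k. P ((f ^^ i) x))"

lemma sigma_fun_eq_orbit_sum_mod: "sigma_fun f n P x k = orbit_sum f P x k mod n"
  by (simp add: sigma_fun_def orbit_sum_def)

lemma orbit_sum_0 [simp]: "orbit_sum f P x 0 = 0"
  by (simp add: orbit_sum_def)

lemma orbit_sum_Suc: "orbit_sum f P x (Suc k) = orbit_sum f P x k + P ((f ^^ k) x)"
  by (simp add: orbit_sum_def)

lemma orbit_sum_add: "orbit_sum f P x (a + b) = orbit_sum f P x a + orbit_sum f P ((f ^^ a) x) b"
  by (induction b) (simp_all add: orbit_sum_Suc funpow_apply_funpow)

lemma orbit_sum_fixed_point:
  assumes "f x = x"
  shows "orbit_sum f P x k = k * P x"
proof -
  have "(f ^^ i) x = x" for i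
    using assms by (induction i) simp_all
  then show ?thesis
    by (simp add: orbit_sum_def)
qed

lemma orbit_sum_periodic:
  assumes "(f ^^ m) x = x"
  shows "orbit_sum f P x (q * m + k) = q * orbit_sum f P x m + orbit_sum f P x k"
proof (induction q)
  case (Suc q)
  have "orbit_sum f P x (Suc q * m + k) = orbit_sum f P x (m + (q * m + k))"
    by (simp add: add.assoc)
  also have "\<dots> = orbit_sum f P x m + orbit_sum f P x (q * m + k)"
    by (simp only: orbit_sum_add assms)
  finally show ?case
    using Suc.IH by simp
qed simp

lemma skew_morphism_bij_betw:
  "skew_morphism G \<phi> \<pi> \<Longrightarrow> bij_betw \<phi> (carrier G) (carrier G)"
  by (simp add: skew_morphism_def)

lemma skew_morphism_funpow_closed:
  "skew_morphism G \<phi> \<pi> \<Longrightarrow> x \<in> carrier G \<Longrightarrow> (\<phi> ^^ k) x \<in> carrier G"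
  by (metis skew_morphism_bij_betw bij_betw_funpow bij_betw_apply)

lemma skew_morphism_funpow_mult:
  fixes G (structure)
  assumes skew: "skew_morphism G \<phi> \<pi>" and x: "x \<in> carrier G" and y: "y \<in> carrier G"
  shows "(\<phi> ^^ k) (x \<otimes> y) = (\<phi> ^^ k) x \<otimes> (\<phi> ^^ orbit_sum \<phi> \<pi> x k) y"
proof (induction k)
  case (Suc k)
  let ?x = "(\<phi> ^^ k) x" and ?s = "orbit_sum \<phi> \<pi> x k"
  have "(\<phi> ^^ Suc k) (x \<otimes> y) = \<phi> (?x \<otimes> (\<phi> ^^ ?s) y)"
    using Suc.IH by simp
  also have "\<dots> = \<phi> ?x \<otimes> (\<phi> ^^ \<pi> ?x) ((\<phi> ^^ ?s) y)"
    using skew skew_morphism_funpow_closed[OF skew] x y by (simp add: skew_morphism_def)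
  also have "\<dots> = (\<phi> ^^ Suc k) x \<otimes> (\<phi> ^^ orbit_sum \<phi> \<pi> x (Suc k)) y"
    by (simp add: orbit_sum_Suc funpow_apply_funpow)
  finally show ?case .
qed simp

locale extended_power_function = group G for G (structure) +
  fixes \<phi> :: "'a \<Rightarrow> 'a" and \<pi> Pw :: "'a \<Rightarrow> nat" and n :: nat
  assumes finite_carrier: "finite (carrier G)"
    and skew: "skew_morphism G \<phi> \<pi>"
    and perm_order_dvd: "perm_order G \<phi> dvd n"
    and ext: "ext_power_function G \<phi> \<pi> n Pw"
begin

abbreviation "m \<equiv> perm_order G \<phi>"

lemma bij_betw_carrier: "bij_betw \<phi> (carrier G) (carrier G)"
  using skew by (rule skew_morphism_bij_betw)

lemma funpow_in_carrier: "x \<in> carrier G \<Longrightarrow> (\<phi> ^^ k) x \<in> carrier G"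
  using skew by (rule skew_morphism_funpow_closed)

lemma funpow_n_eq: "x \<in> carrier G \<Longrightarrow> (\<phi> ^^ n) x = x"
  using perm_order_dvd perm_order_dvd_iff[OF finite_carrier bij_betw_carrier] by blast

lemma orbit_sum_Pw_cong_\<pi>:
  assumes "x \<in> carrier G"
  shows "[orbit_sum \<phi> Pw x k = orbit_sum \<phi> \<pi> x k] (mod m)"
  unfolding orbit_sum_def
  using ext funpow_in_carrier[OF assms] by (intro cong_sum) (simp add: ext_power_function_def)

lemma funpow_mult_orbit_sum:
  assumes "x \<in> carrier G" and "y \<in> carrier G"
  shows "(\<phi> ^^ k) (x \<otimes> y) = (\<phi> ^^ k) x \<otimes> (\<phi> ^^ orbit_sum \<phi> Pw x k) y"
  using skew_morphism_funpow_mult[OF skew assms, of k]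
    funpow_cong_perm_order[OF finite_carrier bij_betw_carrier assms(2)
      orbit_sum_Pw_cong_\<pi>[OF assms(1)]]
  by simp

lemma perm_order_dvd_orbit_sum:
  assumes x: "x \<in> carrier G"
  shows "m dvd orbit_sum \<phi> Pw x m"
proof -
  have "(\<phi> ^^ orbit_sum \<phi> Pw x m) y = y" if y: "y \<in> carrier G" for y
  proof -
    have "x \<otimes> (\<phi> ^^ orbit_sum \<phi> Pw x m) y = (\<phi> ^^ m) (x \<otimes> y)"
      using funpow_mult_orbit_sum[OF x y] funpow_perm_order[OF finite_carrier bij_betw_carrier] x
      by simp
    also have "\<dots> = x \<otimes> y"
      using funpow_perm_order[OF finite_carrier bij_betw_carrier] x y by simp
    finally show ?thesis
      using x y funpow_in_carrier by simp
  qed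
  then show ?thesis
    using perm_order_dvd_iff[OF finite_carrier bij_betw_carrier] by blast
qed

lemma dvd_orbit_sum_n:
  assumes "x \<in> carrier G"
  shows "n dvd orbit_sum \<phi> Pw x n"
proof -
  obtain t where t: "n = t * m"
    using perm_order_dvd by (metis dvdE mult.commute)
  then have "orbit_sum \<phi> Pw x n = t * orbit_sum \<phi> Pw x m"
    using orbit_sum_periodic[OF funpow_perm_order[OF finite_carrier bij_betw_carrier assms], of Pw t 0]
    by simp
  then show ?thesis
    using perm_order_dvd_orbit_sum[OF assms] t by simp
qed

lemma orbit_sum_cong_mod:
  assumes "x \<in> carrier G" and "[k1 = k2] (mod n)"
  shows "[orbit_sum \<phi> Pw x k1 = orbit_sum \<phi> Pw x k2] (mod n)"
proof -
  have "[orbit_sum \<phi> Pw x k = orbit_sum \<phi> Pw x (k mod n)] (mod n)" for k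
    using orbit_sum_periodic[OF funpow_n_eq[OF assms(1)], of Pw "k div n" "k mod n"]
      dvd_orbit_sum_n[OF assms(1)]
    by (auto simp: cong_def mult.left_commute elim!: dvdE)
  then show ?thesis
    using assms(2) by (metis cong_def cong_sym cong_trans)
qed

lemma orbit_sum_mult_cong:
  assumes x: "x \<in> carrier G" and y: "y \<in> carrier G"
  shows "[orbit_sum \<phi> Pw (x \<otimes> y) k = orbit_sum \<phi> Pw y (orbit_sum \<phi> Pw x k)] (mod n)"
proof (induction k)
  case (Suc k)
  let ?x = "(\<phi> ^^ k) x" and ?y = "(\<phi> ^^ orbit_sum \<phi> Pw x k) y"
  have "orbit_sum \<phi> Pw (x \<otimes> y) (Suc k) = orbit_sum \<phi> Pw (x \<otimes> y) k + Pw (?x \<otimes> ?y)"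
    using funpow_mult_orbit_sum[OF x y] by (simp add: orbit_sum_Suc)
  moreover have "[Pw (?x \<otimes> ?y) = orbit_sum \<phi> Pw ?y (Pw ?x)] (mod n)"
    using ext funpow_in_carrier x y by (simp add: ext_power_function_def orbit_sum_def)
  moreover have "orbit_sum \<phi> Pw y (orbit_sum \<phi> Pw x (Suc k))
      = orbit_sum \<phi> Pw y (orbit_sum \<phi> Pw x k) + orbit_sum \<phi> Pw ?y (Pw ?x)"
    by (simp add: orbit_sum_Suc orbit_sum_add)
  ultimately show ?case
    using Suc.IH by (simp add: cong_add)
qed simp

lemma orbit_sum_one_cong: "[orbit_sum \<phi> Pw \<one> k = k] (mod n)"
proof -
  have "orbit_sum \<phi> Pw \<one> k = k * Pw \<one>"
    using skew by (simp add: orbit_sum_fixed_point skew_morphism_def)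
  moreover have "[Pw \<one> = 1] (mod n)"
    using ext by (simp add: ext_power_function_def)
  ultimately show ?thesis
    using cong_scalar_left[of _ 1 n k] by simp
qed

lemma sigma_fun_mult:
  assumes "x \<in> carrier G" and "y \<in> carrier G"
  shows "sigma_fun \<phi> n Pw (x \<otimes> y) k = sigma_fun \<phi> n Pw y (sigma_fun \<phi> n Pw x k)"
proof -
  have "[orbit_sum \<phi> Pw x k = orbit_sum \<phi> Pw x k mod n] (mod n)"
    by (simp add: cong_def)
  then have "[orbit_sum \<phi> Pw y (orbit_sum \<phi> Pw x k)
      = orbit_sum \<phi> Pw y (orbit_sum \<phi> Pw x k mod n)] (mod n)"
    by (rule orbit_sum_cong_mod[OF assms(2)])
  with orbit_sum_mult_cong[OF assms] show ?thesis
    by (simp add: sigma_fun_eq_orbit_sum_mod cong_def)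
qed

lemma sigma_fun_eq_iff:
  "(\<forall>x\<in>carrier G. sigma_fun \<phi> n Pw x k1 = sigma_fun \<phi> n Pw x k2) \<longleftrightarrow> [k1 = k2] (mod n)"
proof
  assume "\<forall>x\<in>carrier G. sigma_fun \<phi> n Pw x k1 = sigma_fun \<phi> n Pw x k2"
  then have "sigma_fun \<phi> n Pw \<one> k1 = sigma_fun \<phi> n Pw \<one> k2"
    by simp
  then have "[orbit_sum \<phi> Pw \<one> k1 = orbit_sum \<phi> Pw \<one> k2] (mod n)"
    by (simp add: sigma_fun_eq_orbit_sum_mod cong_def)
  then show "[k1 = k2] (mod n)"
    using orbit_sum_one_cong by (meson cong_sym cong_trans)
next
  assume "[k1 = k2] (mod n)"
  from orbit_sum_cong_mod[OF _ this]
  show "\<forall>x\<in>carrier G. sigma_fun \<phi> n Pw x k1 = sigma_fun \<phi> n Pw x k2"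
    by (simp add: sigma_fun_eq_orbit_sum_mod cong_def)
qed

lemma sigma_fun_eq_0_iff: "(\<forall>x\<in>carrier G. sigma_fun \<phi> n Pw x k = 0) \<longleftrightarrow> n dvd k"
  using sigma_fun_eq_iff[of k 0] by (simp add: sigma_fun_eq_orbit_sum_mod cong_0_iff)

lemma sigma_fun_perm_order_mult_add:
  assumes "x \<in> carrier G"
  shows "sigma_fun \<phi> n Pw x (q * m + r) = (q * sigma_fun \<phi> n Pw x m + sigma_fun \<phi> n Pw x r) mod n"
proof -
  have "[q * orbit_sum \<phi> Pw x m + orbit_sum \<phi> Pw x r
      = q * (orbit_sum \<phi> Pw x m mod n) + orbit_sum \<phi> Pw x r mod n] (mod n)"
    by (intro cong_add cong_scalar_left) (simp_all add: cong_def)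
  then show ?thesis
    using orbit_sum_periodic[OF funpow_perm_order[OF finite_carrier bij_betw_carrier assms]]
    by (simp add: sigma_fun_eq_orbit_sum_mod cong_def)
qed

end

theorem proposition3p2:
  fixes G (structure) and \<phi> :: "'a \<Rightarrow> 'a" and \<pi> Pw :: "'a \<Rightarrow> nat" and n :: nat
  assumes "group G" and "finite (carrier G)"
    and "skew_morphism G \<phi> \<pi>"
    and "0 < n" and "perm_order G \<phi> dvd n"
    and "ext_power_function G \<phi> \<pi> n Pw"
  shows "(\<forall>x\<in>carrier G. \<forall>y\<in>carrier G. \<forall>k.
            sigma_fun \<phi> n Pw (x \<otimes> y) k = sigma_fun \<phi> n Pw y (sigma_fun \<phi> n Pw x k))
     \<and> (\<forall>k. (\<forall>x\<in>carrier G. sigma_fun \<phi> n Pw x k = 0) \<longleftrightarrow> n dvd k)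
     \<and> (\<forall>x\<in>carrier G. \<forall>q r.
            sigma_fun \<phi> n Pw x (q * perm_order G \<phi> + r)
              = (q * sigma_fun \<phi> n Pw x (perm_order G \<phi>) + sigma_fun \<phi> n Pw x r) mod n)
     \<and> (\<forall>k1 k2. (\<forall>x\<in>carrier G. sigma_fun \<phi> n Pw x k1 = sigma_fun \<phi> n Pw x k2)
            \<longleftrightarrow> [k1 = k2] (mod n))"
proof -
  interpret extended_power_function G \<phi> \<pi> Pw n
    using assms by (simp add: extended_power_function_def extended_power_function_axioms_def)
  show ?thesis
    using sigma_fun_mult sigma_fun_eq_0_iff sigma_fun_perm_order_mult_add sigma_fun_eq_iff
    by blast
qed

end
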